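(* (Perfect soundness of the Five Cells protocol.) Let a Five Cells puzzle on an $m\times n$ grid be given. If the prover $P$ does not know a solution of the puzzle, then in the Five Cells zero-knowledge protocol described in the context the verifier $V$ always rejects; equivalently, if $V$ accepts, then the cards printed during the protocol determine a partition of the grid into pentominoes which is a valid solution of the puzzle.
   Context: Five Cells puzzle: an $m\times n$ rectangular grid in which some cells contain a number. A solution is a partition of the grid into pentominoes (connected sets of 5 cells; a pentomino obtained from another by rotation or reflection counts as a different type, giving 63 types) such that for every numbered cell, the number equals the number of that cell's four edges which are borders of pentominoes (edges on the outer boundary of the grid count as borders). Cards: each card has either an integer or nothing (a blank card) on its front; all backs are indistinguishable. A pile-shifting shuffle applied to a matrix of face-down cards (each entry may be a stack, all stacks in a row of equal size) cyclically shifts its columns by a uniformly random amount unknown to everyone. Chosen cut protocol: given face-down cards (or equal-size stacks) $c_1,\dots,c_q$ and a secret index $i$ chosen by $P$, $P$ forms a $3\times q$ matrix with row 1 equal to $c_1,\dots,c_q$, row 2 a face-down card $1$ in column $i$ and $0$ elsewhere, row 3 a card $1$ in column 1 and $0$ elsewhere (turned face-down); a pile-shifting shuffle is applied; row 2 is revealed and the card of row 1 above the $1$ is $c_i$; after $c_i$ has been used it is put back, all face-up cards are turned face-down, another pile-shifting shuffle is applied, row 3 is revealed and the columns are cyclically shifted so that its $1$ returns to column 1. Printing protocol: given a face-down $p\times q$ template and a face-down $p\times q$ area, each template card is placed on the corresponding area card, forming $pq$ stacks of two; for each stack, $P$ uses the chosen cut protocol to select one of its two cards, the selected card is revealed, $V$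 rejects unless it is blank, and it is removed. Five Cells protocol: $P$ publicly puts a blank card on every cell, appends 4 rows and 4 columns of blank "dummy" cards below and to the right, and turns all cards face-down, giving an $(m+4)\times(n+4)$ matrix, read row by row as a sequence $a_1,a_2,\dots$. $P$ builds 63 templates, one per pentomino type: a $5\times5$ matrix with the pentomino at the top-left, each of its cells a card with the number of that cell's edges which are borders of the pentomino, all other cards blank; $V$ checks all templates. For $i=1,\dots,k$ with $k=mn/5$: (1) using the chosen cut protocol on the sequence, $P$ selects the top-left card of a $5\times5$ area (cards at positions $j+r(n+4)+c$, $0\le r,c\le4$); (2) using the chosen cut protocol, $P$ selects one template; (3) the printing protocol is applied to this template and area; (4) $P$ reconstructs a template and returns it to the pile, and $V$ checks again that the pile consists of the 63 correct templates (rejecting otherwise). Finally $P$ reveals the cards on the originally numbered cells and $V$ rejects unless they match the given numbers; $P$ reveals all dummy cards and $V$ rejects unless they are blank. Otherwise $V$ accepts. *)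

theory Defs
  imports Main "HOL-Library.Disjoint_Sets"
begin

definition grid :: "nat \<Rightarrow> nat \<Rightarrow> (int \<times> int) set" where
  "grid m n = {(i, j). 0 \<le> i \<and> i < int m \<and> 0 \<le> j \<and> j < int n}"

definition nbrs :: "int \<times> int \<Rightarrow> (int \<times> int) set" where
  "nbrs x = (case x of (i, j) \<Rightarrow> {(i + 1, j), (i - 1, j), (i, j + 1), (i, j - 1)})"

text \<open>Number of edges of cell x that are borders of the cell set S (x in S):
  an edge is a border iff the cell on the other side is not in S
  (in particular every edge on the outer boundary of the grid is a border).\<close>

definition borders :: "(int \<times> int) set \<Rightarrow> int \<times> int \<Rightarrow> nat" where
  "borders S x = card (nbrs x - S)"

definition adjrel :: "(int \<times> int) set \<Rightarrow> ((int \<times> int) \<times> (int \<times> int)) set" where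
  "adjrel S = {(a, b). a \<in> S \<and> b \<in> S \<and> b \<in> nbrs a}"

definition cell_connected :: "(int \<times> int) set \<Rightarrow> bool" where
  "cell_connected S \<longleftrightarrow> (\<forall>x\<in>S. \<forall>y\<in>S. (x, y) \<in> (adjrel S)\<^sup>*)"

definition is_pentomino :: "(int \<times> int) set \<Rightarrow> bool" where
  "is_pentomino S \<longleftrightarrow> finite S \<and> card S = 5 \<and> cell_connected S"

text \<open>A puzzle is given by its size m x n and a clue function; clue x = Some v
  means that grid cell x contains the number v (values outside the grid are ignored).\<close>

definition is_solution :: "nat \<Rightarrow> nat \<Rightarrow> (int \<times> int \<Rightarrow> int option) \<Rightarrow> (int \<times> int) set set \<Rightarrow> bool" where
  "is_solution m n clue Pt \<longleftrightarrow>
     partition_on (grid m n) Pt \<and> (\<forall>B\<in>Pt. is_pentomino B) \<and>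
     (\<forall>B\<in>Pt. \<forall>x\<in>B. \<forall>v. clue x = Some v \<longrightarrow> v = int (borders B x))"

section \<open>The protocol (abstracted: shuffles do not influence which card is selected)\<close>

text \<open>Cards: Some v is a card with integer v, None is a blank card.\<close>

type_synonym card = "int option"

text \<open>The 63 pentomino types, as shapes placed at the top-left of a 5x5 matrix.\<close>

definition pent_types :: "(int \<times> int) set set" where
  "pent_types = {S. S \<subseteq> {0..4} \<times> {0..4} \<and> is_pentomino S \<and>
                    (\<exists>c. (0, c) \<in> S) \<and> (\<exists>r. (r, 0) \<in> S)}"

definition template :: "(int \<times> int) set \<Rightarrow> int \<times> int \<Rightarrow> card" where
  "template S x = (if x \<in> S then Some (int (borders S x)) else None)"

text \<open>The (m+4) x (n+4) matrix is read row by row as a sequence with positions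
  0 ..< (m+4)(n+4); position p is row p div (n+4), column p mod (n+4).
  The chosen cut protocol acts cyclically on the sequence, so area positions
  are taken modulo the sequence length.\<close>

definition seqlen :: "nat \<Rightarrow> nat \<Rightarrow> nat" where
  "seqlen m n = (m + 4) * (n + 4)"

definition area_pos :: "nat \<Rightarrow> nat \<Rightarrow> nat \<Rightarrow> nat \<Rightarrow> nat \<Rightarrow> nat" where
  "area_pos m n j r c = (j + r * (n + 4) + c) mod seqlen m n"

definition stacks :: "(nat \<times> nat) list" where
  "stacks = [(r, c). r \<leftarrow> [0..<5], c \<leftarrow> [0..<5]]"

text \<open>One stack of the printing protocol: sel r c = True means P selects the
  template card, otherwise the area card.\<close>

definition print_stack ::
  "nat \<Rightarrow> nat \<Rightarrow> nat \<Rightarrow> (int \<times> int) set \<Rightarrow> (nat \<Rightarrow> nat \<Rightarrow> bool) \<Rightarrow> nat \<times> nat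
     \<Rightarrow> (nat \<Rightarrow> card) option \<Rightarrow> (nat \<Rightarrow> card) option" where
  "print_stack m n j S sel rc ost =
     (case ost of None \<Rightarrow> None
      | Some st \<Rightarrow>
        (case rc of (r, c) \<Rightarrow>
          (let p = area_pos m n j r c; a = st p; t = template S (int r, int c) in
           if sel r c then (if t = None then Some (st(p := a)) else None)
           else (if a = None then Some (st(p := t)) else None))))"

definition printing ::
  "nat \<Rightarrow> nat \<Rightarrow> nat \<Rightarrow> (int \<times> int) set \<Rightarrow> (nat \<Rightarrow> nat \<Rightarrow> bool)
     \<Rightarrow> (nat \<Rightarrow> card) option \<Rightarrow> (nat \<Rightarrow> card) option" where
  "printing m n j S sel ost = fold (print_stack m n j S sel) stacks ost"

text \<open>A choice of P in one iteration: the top-left position j of the area, the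
  template (pentomino type) S, and the selections in the printing protocol.
  Since V checks the template pile, S is always one of the correct templates.\<close>

type_synonym choice = "nat \<times> (int \<times> int) set \<times> (nat \<Rightarrow> nat \<Rightarrow> bool)"

definition valid_choice :: "nat \<Rightarrow> nat \<Rightarrow> choice \<Rightarrow> bool" where
  "valid_choice m n ch \<longleftrightarrow> (case ch of (j, S, sel) \<Rightarrow> j < seqlen m n \<and> S \<in> pent_types)"

definition run :: "nat \<Rightarrow> nat \<Rightarrow> choice list \<Rightarrow> (nat \<Rightarrow> card) option" where
  "run m n cs = fold (\<lambda>ch ost. case ch of (j, S, sel) \<Rightarrow> printing m n j S sel ost)
                     cs (Some (\<lambda>_. None))"

definition grid_pos :: "nat \<Rightarrow> int \<times> int \<Rightarrow> nat" where
  "grid_pos n x = (case x of (i, j) \<Rightarrow> nat i * (n + 4) + nat j)"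

definition is_dummy_pos :: "nat \<Rightarrow> nat \<Rightarrow> nat \<Rightarrow> bool" where
  "is_dummy_pos m n p \<longleftrightarrow> p < seqlen m n \<and> (m \<le> p div (n + 4) \<or> n \<le> p mod (n + 4))"

definition final_check :: "nat \<Rightarrow> nat \<Rightarrow> (int \<times> int \<Rightarrow> int option) \<Rightarrow> (nat \<Rightarrow> card) \<Rightarrow> bool" where
  "final_check m n clue st \<longleftrightarrow>
     (\<forall>x\<in>grid m n. \<forall>v. clue x = Some v \<longrightarrow> st (grid_pos n x) = Some v) \<and>
     (\<forall>p. is_dummy_pos m n p \<longrightarrow> st p = None)"

definition V_accepts :: "nat \<Rightarrow> nat \<Rightarrow> (int \<times> int \<Rightarrow> int option) \<Rightarrow> choice list \<Rightarrow> bool" where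
  "V_accepts m n clue cs \<longleftrightarrow>
     length cs = m * n div 5 \<and> (\<forall>ch\<in>set cs. valid_choice m n ch) \<and>
     (\<exists>st. run m n cs = Some st \<and> final_check m n clue st)"

end

theory Submission
  imports Defs "HOL-Library.Product_Plus"
begin

(* A successful run never overwrites a card: a printed cell of a template is non-blank, so the
   card it lands on must have been blank.  Hence the k = mn/5 iterations print into pairwise
   different positions of the matrix.  The final check forces every dummy card to stay blank,
   so each printed pentomino lies in the grid, and since every pentomino type touches row 0 and
   column 0 of its template, the printed area does not wrap around the matrix: each print is a
   translate of a pentomino inside the grid, carrying its own border counts.  Being k pairwise
   disjoint sets of 5 cells in a grid of mn cells, the translates partition the grid, and the
   revealed clue cells show exactly the border counts required of a solution. *)

lemma map_le_SomeD: "m\<^sub>1 \<subseteq>\<^sub>m m\<^sub>2 \<Longrightarrow> m\<^sub>1 a = Some b \<Longrightarrow> m\<^sub>2 a = Some b"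
  by (force simp: map_le_def)

lemma map_le_NoneD: "m\<^sub>1 \<subseteq>\<^sub>m m\<^sub>2 \<Longrightarrow> m\<^sub>2 a = None \<Longrightarrow> m\<^sub>1 a = None"
  by (force simp: map_le_def)

lemma fold_None_strict:
  assumes "\<And>x. f x None = None"
  shows "fold f xs None = None"
  by (induction xs) (simp_all add: assms)

lemma fold_Some_ConsE:
  assumes "\<And>x. f x None = None" and "fold f (x # xs) (Some s) = Some s'"
  obtains s1 where "f x (Some s) = Some s1" and "fold f xs (Some s1) = Some s'"
  using assms fold_None_strict[of f xs] by (cases "f x (Some s)") auto

lemma fold_map_le:
  assumes "fold f xs (Some s) = Some s'"
    and "\<And>x. f x None = None" and "\<And>x s s'. f x (Some s) = Some s' \<Longrightarrow> s \<subseteq>\<^sub>m s'"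
  shows "s \<subseteq>\<^sub>m s'"
  using assms(1)
proof (induction xs arbitrary: s)
  case (Cons x xs)
  obtain s1 where first: "f x (Some s) = Some s1" and rest: "fold f xs (Some s1) = Some s'"
    using assms(2) Cons.prems by (rule fold_Some_ConsE)
  show ?case
    using map_le_trans[OF assms(3)[OF first] Cons.IH[OF rest]] .
qed simp

lemma print_stack_None: "print_stack m n j S sel rc None = None"
  by (simp add: print_stack_def)

lemma print_stack_map_le:
  "print_stack m n j S sel rc (Some st) = Some st' \<Longrightarrow> st \<subseteq>\<^sub>m st'"
  by (cases rc) (auto simp: print_stack_def Let_def map_le_def split: if_splits)

(* A template cell of S is non-blank, so P must have selected the area card, which was blank. *)
lemma print_stack_prints:
  assumes "print_stack m n j S sel (r, c) (Some st) = Some st'" and "(int r, int c) \<in> S"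
  shows "st (area_pos m n j r c) = None \<and>
         st' (area_pos m n j r c) = Some (int (borders S (int r, int c)))"
  using assms unfolding print_stack_def Let_def template_def
  by (auto split: if_splits)

lemma fold_print_stack_map_le:
  "fold (print_stack m n j S sel) l (Some st) = Some st' \<Longrightarrow> st \<subseteq>\<^sub>m st'"
  by (erule fold_map_le) (rule print_stack_None, erule print_stack_map_le)

lemma fold_print_stack_prints:
  assumes "fold (print_stack m n j S sel) l (Some st) = Some st'"
    and "(r, c) \<in> set l" and "(int r, int c) \<in> S"
  shows "st (area_pos m n j r c) = None \<and>
         st' (area_pos m n j r c) = Some (int (borders S (int r, int c)))"
  using assms
proof (induction l arbitrary: st)
  case (Cons rc l)
  obtain r' c' where rc: "rc = (r', c')" by fastforce
  from Cons.prems(1)[unfolded rc] obtain st1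
    where first: "print_stack m n j S sel (r', c') (Some st) = Some st1"
      and rest: "fold (print_stack m n j S sel) l (Some st1) = Some st'"
    by (rule fold_Some_ConsE[of "print_stack m n j S sel", OF print_stack_None])
  show ?case
  proof (cases "(r, c) = rc")
    case True
    then show ?thesis
      using print_stack_prints[OF first] fold_print_stack_map_le[OF rest] Cons.prems(3) rc
      by (auto intro: map_le_SomeD)
  next
    case False
    then show ?thesis
      using Cons.IH[OF rest] Cons.prems(2,3) print_stack_map_le[OF first]
      by (auto intro: map_le_NoneD)
  qed
qed simp

lemma set_stacks: "set stacks = {0..<5} \<times> {0..<5}"
  by (auto simp: stacks_def)

lemma printing_None: "printing m n j S sel None = None"
  by (simp add: printing_def fold_None_strict print_stack_None)

lemma printing_map_le: "printing m n j S sel (Some st) = Some st' \<Longrightarrow> st \<subseteq>\<^sub>m st'"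
  unfolding printing_def by (rule fold_print_stack_map_le)

definition area_cell :: "nat \<Rightarrow> nat \<Rightarrow> nat \<Rightarrow> int \<times> int \<Rightarrow> nat" where
  "area_cell m n j y = area_pos m n j (nat (fst y)) (nat (snd y))"

lemma printing_prints:
  assumes "printing m n j S sel (Some st) = Some st'"
    and "S \<subseteq> {0..4} \<times> {0..4}" and "y \<in> S"
  shows "st (area_cell m n j y) = None \<and> st' (area_cell m n j y) = Some (int (borders S y))"
proof -
  obtain a b where y: "y = (a, b)" and ab: "0 \<le> a" "a \<le> 4" "0 \<le> b" "b \<le> 4"
    using assms(2,3) by fastforce
  have "(nat a, nat b) \<in> set stacks"
    using ab by (simp add: set_stacks nat_less_iff)
  then show ?thesis
    using fold_print_stack_prints[OF assms(1)[unfolded printing_def], of "nat a" "nat b"] assms(3) y ab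
    by (simp add: area_cell_def)
qed

definition print_choice :: "nat \<Rightarrow> nat \<Rightarrow> choice \<Rightarrow> (nat \<Rightarrow> card) option \<Rightarrow> (nat \<Rightarrow> card) option" where
  "print_choice m n ch = (case ch of (j, S, sel) \<Rightarrow> printing m n j S sel)"

lemma run_eq_fold: "run m n cs = fold (print_choice m n) cs (Some Map.empty)"
proof -
  have "(\<lambda>ch ost. case ch of (j, S, sel) \<Rightarrow> printing m n j S sel ost) = print_choice m n"
    by (auto simp: fun_eq_iff print_choice_def)
  then show ?thesis
    by (simp add: run_def)
qed

lemma print_choice_None: "print_choice m n ch None = None"
  by (cases ch) (simp add: print_choice_def printing_None)

lemma print_choice_map_le: "print_choice m n ch (Some st) = Some st' \<Longrightarrow> st \<subseteq>\<^sub>m st'"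
  by (cases ch) (simp add: print_choice_def printing_map_le)

lemma fold_print_choice_map_le:
  "fold (print_choice m n) cs (Some st) = Some st' \<Longrightarrow> st \<subseteq>\<^sub>m st'"
  by (erule fold_map_le) (rule print_choice_None, erule print_choice_map_le)

lemma fold_print_choice_prints:
  assumes "fold (print_choice m n) cs (Some st) = Some st'"
    and "(j, S, sel) \<in> set cs" and "S \<subseteq> {0..4} \<times> {0..4}" and "y \<in> S"
  shows "st (area_cell m n j y) = None \<and> st' (area_cell m n j y) = Some (int (borders S y))"
  using assms(1,2)
proof (induction cs arbitrary: st)
  case (Cons ch cs)
  obtain st1 where first: "print_choice m n ch (Some st) = Some st1"
    and rest: "fold (print_choice m n) cs (Some st1) = Some st'"
    using Cons.prems(1) by (rule fold_Some_ConsE[of "print_choice m n", OF print_choice_None])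
  show ?case
  proof (cases "ch = (j, S, sel)")
    case True
    then have "st (area_cell m n j y) = None \<and> st1 (area_cell m n j y) = Some (int (borders S y))"
      using printing_prints[OF _ assms(3,4)] first by (simp add: print_choice_def)
    then show ?thesis
      using map_le_SomeD[OF fold_print_choice_map_le[OF rest]] by blast
  next
    case False
    then have "(j, S, sel) \<in> set cs"
      using Cons.prems(2) by simp
    then show ?thesis
      using Cons.IH[OF rest] map_le_NoneD[OF print_choice_map_le[OF first]] by blast
  qed
qed simp

lemma fold_print_choice_cells_distinct:
  assumes "fold (print_choice m n) cs (Some st) = Some st'"
    and "i < i'" and "i' < length cs"
    and "cs ! i = (j, S, sel)" and "S \<subseteq> {0..4} \<times> {0..4}" and "y \<in> S"
    and "cs ! i' = (j', S', sel')" and "S' \<subseteq> {0..4} \<times> {0..4}" and "y' \<in> S'"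
  shows "area_cell m n j y \<noteq> area_cell m n j' y'"
  using assms(1-4,7)
proof (induction cs arbitrary: st i i')
  case (Cons ch cs)
  obtain st1 where first: "print_choice m n ch (Some st) = Some st1"
    and rest: "fold (print_choice m n) cs (Some st1) = Some st'"
    using Cons.prems(1) by (rule fold_Some_ConsE[of "print_choice m n", OF print_choice_None])
  show ?case
  proof (cases i)
    case 0
    then have "st1 (area_cell m n j y) = Some (int (borders S y))"
      using printing_prints[OF _ assms(5,6)] first Cons.prems(4) by (simp add: print_choice_def)
    moreover have "(j', S', sel') \<in> set cs"
      using Cons.prems(2,3,5) 0 by (metis Suc_less_eq gr0_implies_Suc nth_Cons_Suc nth_mem length_Cons)
    then have "st1 (area_cell m n j' y') = None"
      using fold_print_choice_prints[OF rest _ assms(8,9)] by blast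
    ultimately show ?thesis by auto
  next
    case (Suc k)
    then show ?thesis
      using Cons.IH[OF rest, of k "i' - 1"] Cons.prems(2-5) by (cases i') auto
  qed
qed simp

lemma nbrs_translate: "nbrs (d + y) = (+) d ` nbrs y"
  by (cases d; cases y) (simp add: nbrs_def algebra_simps)

lemma borders_translate: "borders ((+) d ` S) (d + y) = borders S y"
  unfolding borders_def nbrs_translate translation_diff[symmetric]
  by (simp add: card_image)

lemma adjrel_translate: "(x, y) \<in> adjrel S \<Longrightarrow> (d + x, d + y) \<in> adjrel ((+) d ` S)"
  by (auto simp: adjrel_def nbrs_translate)

lemma cell_connected_translate:
  assumes "cell_connected S"
  shows "cell_connected ((+) d ` S)"
proof -
  have "(d + x, d + y) \<in> (adjrel ((+) d ` S))\<^sup>*" if "(x, y) \<in> (adjrel S)\<^sup>*" for x y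
    using that by induction (auto intro: rtrancl_into_rtrancl adjrel_translate)
  then show ?thesis
    using assms by (auto simp: cell_connected_def)
qed

lemma is_pentomino_translate: "is_pentomino S \<Longrightarrow> is_pentomino ((+) d ` S)"
  by (simp add: is_pentomino_def card_image cell_connected_translate)

definition offset :: "nat \<Rightarrow> nat \<Rightarrow> int \<times> int" where
  "offset n j = (int (j div (n + 4)), int (j mod (n + 4)))"

lemma area_pos_no_wrap:
  assumes "j mod (n + 4) + c < n + 4" and "j div (n + 4) + r < m + 4"
  shows "area_pos m n j r c = (j div (n + 4) + r) * (n + 4) + (j mod (n + 4) + c)"
proof -
  let ?w = "n + 4"
  have eq: "j + r * ?w + c = (j div ?w + r) * ?w + (j mod ?w + c)"
    using div_mult_mod_eq[of j ?w] by (simp add: algebra_simps)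
  have "(j div ?w + r) * ?w + (j mod ?w + c) < (j div ?w + r + 1) * ?w"
    using assms(1) by simp
  also have "\<dots> \<le> (m + 4) * ?w"
    using assms(2) by (intro mult_right_mono) auto
  finally show ?thesis
    unfolding area_pos_def seqlen_def eq by simp
qed

lemma not_dummy_area_cell:
  assumes "\<not> is_dummy_pos m n (area_cell m n j y)"
  shows "area_cell m n j y div (n + 4) < m \<and> area_cell m n j y mod (n + 4) < n"
  using assms by (auto simp: is_dummy_pos_def area_cell_def area_pos_def seqlen_def)

(* The cells of S in row 0 and column 0 pin the top-left corner j of the area inside the grid,
   so the area does not wrap around the cyclically indexed matrix. *)
lemma pent_type_anchor_in_grid:
  assumes "S \<in> pent_types" and "j < seqlen m n"
    and "\<forall>y\<in>S. \<not> is_dummy_pos m n (area_cell m n j y)"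
  shows "j div (n + 4) < m" and "j mod (n + 4) < n"
proof -
  let ?w = "n + 4"
  have in_grid: "area_cell m n j y div ?w < m \<and> area_cell m n j y mod ?w < n" if "y \<in> S" for y
    using assms(3) that not_dummy_area_cell by blast
  obtain r c where r: "(r, 0) \<in> S" and c: "(0, c) \<in> S" and "0 \<le> c" "c \<le> 4"
    using assms(1) by (auto simp: pent_types_def)
  have "area_cell m n j (r, 0) mod ?w = j mod ?w"
    by (simp add: area_cell_def area_pos_def seqlen_def mod_mod_cancel)
  then show col: "j mod ?w < n"
    using in_grid[OF r] by simp
  have "j div ?w < m + 4"
    using assms(2) by (simp add: seqlen_def div_less_iff_less_mult)
  then have "area_cell m n j (0, c) div ?w = j div ?w"
    using area_pos_no_wrap[of j n "nat c" 0 m] col \<open>c \<le> 4\<close> by (simp add: area_cell_def)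
  then show "j div ?w < m"
    using in_grid[OF c] by simp
qed

lemma placed_cell_in_grid:
  assumes "S \<in> pent_types" and "j < seqlen m n"
    and "\<forall>y\<in>S. \<not> is_dummy_pos m n (area_cell m n j y)" and "y \<in> S"
  shows "offset n j + y \<in> grid m n" and "grid_pos n (offset n j + y) = area_cell m n j y"
proof -
  let ?w = "n + 4"
  obtain a b where y: "y = (a, b)" and ab: "0 \<le> a" "a \<le> 4" "0 \<le> b" "b \<le> 4"
    using assms(1,4) by (fastforce simp: pent_types_def)
  note anchor = pent_type_anchor_in_grid[OF assms(1-3)]
  have cell: "area_cell m n j y = (j div ?w + nat a) * ?w + (j mod ?w + nat b)"
    using area_pos_no_wrap[of j n "nat b" "nat a" m] anchor ab y by (simp add: area_cell_def)
  have "area_cell m n j y div ?w < m \<and> area_cell m n j y mod ?w < n"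
    using not_dummy_area_cell assms(3,4) by blast
  then have "j div ?w + nat a < m" and "j mod ?w + nat b < n"
    using anchor ab unfolding cell by auto
  then show "offset n j + y \<in> grid m n" and "grid_pos n (offset n j + y) = area_cell m n j y"
    using ab cell unfolding y by (auto simp: offset_def grid_def grid_pos_def nat_add_distrib)
qed

definition placed :: "nat \<Rightarrow> choice \<Rightarrow> (int \<times> int) set" where
  "placed n ch = (case ch of (j, S, sel) \<Rightarrow> (+) (offset n j) ` S)"

lemma accepted_choice_valid:
  assumes "V_accepts m n clue cs" and "(j, S, sel) \<in> set cs"
  shows "S \<in> pent_types" and "j < seqlen m n"
  using assms by (auto simp: V_accepts_def valid_choice_def)

lemma accepted_cell:
  assumes "V_accepts m n clue cs" and "run m n cs = Some st"
    and "(j, S, sel) \<in> set cs" and "y \<in> S"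
  shows "offset n j + y \<in> grid m n"
    and "grid_pos n (offset n j + y) = area_cell m n j y"
    and "st (area_cell m n j y) = Some (int (borders S y))"
proof -
  note S = accepted_choice_valid[OF assms(1,3)]
  then have "S \<subseteq> {0..4} \<times> {0..4}"
    by (simp add: pent_types_def)
  then have printed: "st (area_cell m n j y) = Some (int (borders S y))" if "y \<in> S" for y
    using fold_print_choice_prints assms(2,3) that unfolding run_eq_fold by blast
  then have "\<forall>y\<in>S. \<not> is_dummy_pos m n (area_cell m n j y)"
    using assms(1,2) by (auto simp: V_accepts_def final_check_def)
  then show "offset n j + y \<in> grid m n" and "grid_pos n (offset n j + y) = area_cell m n j y"
    using placed_cell_in_grid[OF S] assms(4) by blast+
  show "st (area_cell m n j y) = Some (int (borders S y))"
    using printed assms(4) .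
qed

lemma accepted_placed_pentomino:
  assumes "V_accepts m n clue cs" and "run m n cs = Some st" and "ch \<in> set cs"
  shows "placed n ch \<subseteq> grid m n"
    and "is_pentomino (placed n ch)"
    and "\<forall>x\<in>placed n ch. st (grid_pos n x) = Some (int (borders (placed n ch) x))"
proof -
  obtain j S sel where ch: "ch = (j, S, sel)"
    by (cases ch)
  show "placed n ch \<subseteq> grid m n"
    using accepted_cell(1)[OF assms(1,2)] assms(3) by (auto simp: placed_def ch)
  show "is_pentomino (placed n ch)"
    using accepted_choice_valid(1)[OF assms(1)] assms(3) is_pentomino_translate
    by (auto simp: placed_def ch pent_types_def)
  show "\<forall>x\<in>placed n ch. st (grid_pos n x) = Some (int (borders (placed n ch) x))"
    using accepted_cell(2,3)[OF assms(1,2)] assms(3) by (auto simp: placed_def ch borders_translate)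
qed

lemma accepted_placed_disjoint:
  assumes "V_accepts m n clue cs" and "run m n cs = Some st"
  shows "disjoint_family_on (\<lambda>i. placed n (cs ! i)) {..<length cs}"
proof -
  have "placed n (cs ! i) \<inter> placed n (cs ! i') = {}" if "i < i'" and "i' < length cs" for i i'
  proof -
    obtain j S sel j' S' sel' where ch: "cs ! i = (j, S, sel)" "cs ! i' = (j', S', sel')"
      by (cases "cs ! i"; cases "cs ! i'")
    have mem: "(j, S, sel) \<in> set cs" "(j', S', sel') \<in> set cs"
      using that nth_mem[of i cs] nth_mem[of i' cs] unfolding ch by simp_all
    then have "S \<subseteq> {0..4} \<times> {0..4}" "S' \<subseteq> {0..4} \<times> {0..4}"
      using accepted_choice_valid(1)[OF assms(1)] by (auto simp: pent_types_def)
    then have "area_cell m n j y \<noteq> area_cell m n j' y'" if "y \<in> S" "y' \<in> S'" for y y'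
      using fold_print_choice_cells_distinct[OF assms(2)[unfolded run_eq_fold] \<open>i < i'\<close>
          \<open>i' < length cs\<close> ch(1) _ that(1) ch(2) _ that(2)]
      by blast
    then have "offset n j + y \<noteq> offset n j' + y'" if "y \<in> S" "y' \<in> S'" for y y'
      using accepted_cell(2)[OF assms mem(1) that(1)] accepted_cell(2)[OF assms mem(2) that(2)] that
      by metis
    then show ?thesis
      unfolding placed_def ch by blast
  qed
  then show ?thesis
    unfolding disjoint_family_on_def by (metis Int_commute lessThan_iff linorder_neqE_nat)
qed

lemma partition_on_of_sum_card:
  assumes "finite A" and "finite I" and "\<And>i. i \<in> I \<Longrightarrow> B i \<subseteq> A"
    and "\<And>i. i \<in> I \<Longrightarrow> B i \<noteq> {}" and "disjoint_family_on B I"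
    and "(\<Sum>i\<in>I. card (B i)) = card A"
  shows "partition_on A (B ` I)"
proof -
  have "finite (B i)" if "i \<in> I" for i
    using finite_subset[OF assms(3) assms(1)] that .
  then have card: "card (\<Union>(B ` I)) = card A"
    using card_UN_disjoint'[OF assms(5) _ assms(2)] assms(6) by simp
  have "\<Union>(B ` I) \<subseteq> A"
    using assms(3) by (rule UN_least)
  then have "\<Union>(B ` I) = A"
    using card by (rule card_subset_eq[OF assms(1)])
  moreover have "{} \<notin> B ` I"
    using assms(4) by (metis imageE)
  ultimately show ?thesis
    unfolding partition_on_def using disjoint_family_on_disjoint_image[OF assms(5)] by blast
qed

lemma grid_eq_product: "grid m n = {0..<int m} \<times> {0..<int n}"
  by (auto simp: grid_def)

theorem lemma2:
  fixes m n :: nat and clue :: "int \<times> int \<Rightarrow> int option" and cs :: "choice list"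
  assumes "5 dvd m * n"
    and "V_accepts m n clue cs"
  shows "\<exists>Pt st. is_solution m n clue Pt \<and> run m n cs = Some st \<and>
           (\<forall>B\<in>Pt. \<forall>x\<in>B. st (grid_pos n x) = Some (int (borders B x)))"
proof -
  obtain st where run: "run m n cs = Some st" and final: "final_check m n clue st"
    and len: "length cs = m * n div 5"
    using assms(2) by (auto simp: V_accepts_def)
  let ?B = "\<lambda>i. placed n (cs ! i)" and ?I = "{..<length cs}"
  note placed = accepted_placed_pentomino[OF assms(2) run nth_mem]
  have card_placed: "card (?B i) = 5" if "i < length cs" for i
    using placed(2)[OF that] by (simp add: is_pentomino_def)
  then have "(\<Sum>i\<in>?I. card (?B i)) = card (grid m n)"
    using assms(1) len by (simp add: grid_eq_product card_cartesian_product)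
  then have partition: "partition_on (grid m n) (?B ` ?I)"
    using placed(1) accepted_placed_disjoint[OF assms(2) run]
    by (intro partition_on_of_sum_card) (auto simp: grid_eq_product dest!: card_placed)
  have printed: "\<forall>B\<in>?B ` ?I. \<forall>x\<in>B. st (grid_pos n x) = Some (int (borders B x))"
    using placed(3) by blast
  then have "\<forall>B\<in>?B ` ?I. \<forall>x\<in>B. \<forall>v. clue x = Some v \<longrightarrow> v = int (borders B x)"
    using placed(1) final by (fastforce simp: final_check_def)
  then show ?thesis
    using partition placed(2) printed run unfolding is_solution_def by blast
qed

end
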